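(* Let $m\ge 3$ and let $K_{1,m}$ be the star with center $v_0$ and pendant vertices $v_1,\dots,v_m$. Then $P_{\{v_1\}}(K_{1,m})>P_{\{v_0\}}(K_{1,m})$, and consequently $\max\{P_A(K_{1,m}): A\subseteq V(K_{1,m}),\ |A|=1\}=P_{\{v_1\}}(K_{1,m})$.
   Context: Classical zero forcing: given a set of black vertices (the rest white), the color change rule turns a white vertex $v$ black if $v$ is the only white neighbor of some black vertex $u$. A set $S$ is a zero forcing set if starting with $S$ black, finitely many applications of this rule make all of $V(G)$ black. Probabilistic process: for a vertex $u$, $N(u)$ is its open neighborhood, $N[u]=N(u)\cup\{u\}$, $\deg(u)=|N(u)|$. Given a current black set $Z$, $F(u\to v)=0$ if $u\notin Z$, or $v\notin N(u)$, or $N[u]\subseteq Z$; otherwise $F(u\to v)=|N[u]\cap Z|/\deg(u)$. One global application of the probabilistic color change rule: black vertices stay black; independently for every pair $(u,v)$ with $u$ black and $v\in N(u)$ white, $u$ forces $v$ with probability $F(u\to v)$; a white vertex becomes black iff some black neighbor forces it. Starting with black set $A$ at step $0$ and applying this rule repeatedly, let $S^k$ be the set of colorings reachable with positive probability after exactly $k$ steps and $P^{(k)}$ the probability distribution on them. Let $T^k\subseteq S^k$ be the colorings whose black set contains a classical zero forcing set of $G$. Define $P_A(G)=P^{(k_0)}(T^{k_0})$ where $k_0$ is the least $k\ge 0$ with $T^k\neq\emptyset$. *)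

theory Defs
  imports "HOL-Probability.Probability"
begin

text \<open>A simple graph is given by a finite vertex set V and a symmetric irreflexive
  adjacency relation E (only its restriction to V matters).\<close>

definition nbhd :: "'a set \<Rightarrow> ('a \<Rightarrow> 'a \<Rightarrow> bool) \<Rightarrow> 'a \<Rightarrow> 'a set" where
  "nbhd V E u = {v \<in> V. E u v}"

definition cnbhd :: "'a set \<Rightarrow> ('a \<Rightarrow> 'a \<Rightarrow> bool) \<Rightarrow> 'a \<Rightarrow> 'a set" where
  "cnbhd V E u = insert u (nbhd V E u)"

definition deg :: "'a set \<Rightarrow> ('a \<Rightarrow> 'a \<Rightarrow> bool) \<Rightarrow> 'a \<Rightarrow> nat" where
  "deg V E u = card (nbhd V E u)"

inductive_set zf_closure :: "'a set \<Rightarrow> ('a \<Rightarrow> 'a \<Rightarrow> bool) \<Rightarrow> 'a set \<Rightarrow> 'a set"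
  for V E S where
  base: "x \<in> S \<Longrightarrow> x \<in> zf_closure V E S"
| force: "u \<in> zf_closure V E S \<Longrightarrow> v \<in> nbhd V E u \<Longrightarrow>
           (\<forall>w \<in> nbhd V E u. w \<noteq> v \<longrightarrow> w \<in> zf_closure V E S) \<Longrightarrow> v \<in> zf_closure V E S"

definition zero_forcing_set :: "'a set \<Rightarrow> ('a \<Rightarrow> 'a \<Rightarrow> bool) \<Rightarrow> 'a set \<Rightarrow> bool" where
  "zero_forcing_set V E S \<longleftrightarrow> S \<subseteq> V \<and> zf_closure V E S = V"

definition force_prob :: "'a set \<Rightarrow> ('a \<Rightarrow> 'a \<Rightarrow> bool) \<Rightarrow> 'a set \<Rightarrow> 'a \<Rightarrow> 'a \<Rightarrow> real" where
  "force_prob V E Z u v =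
     (if u \<notin> Z \<or> v \<notin> nbhd V E u \<or> cnbhd V E u \<subseteq> Z then 0
      else real (card (cnbhd V E u \<inter> Z)) / real (deg V E u))"

definition force_pairs :: "'a set \<Rightarrow> ('a \<Rightarrow> 'a \<Rightarrow> bool) \<Rightarrow> 'a set \<Rightarrow> ('a \<times> 'a) set" where
  "force_pairs V E Z = {(u, v). u \<in> Z \<and> v \<in> nbhd V E u \<and> v \<notin> Z}"

definition pzf_step :: "'a set \<Rightarrow> ('a \<Rightarrow> 'a \<Rightarrow> bool) \<Rightarrow> 'a set \<Rightarrow> 'a set pmf" where
  "pzf_step V E Z =
     map_pmf (\<lambda>f. Z \<union> {v. \<exists>u. (u, v) \<in> force_pairs V E Z \<and> f (u, v)})
       (Pi_pmf (force_pairs V E Z) False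
          (\<lambda>(u, v). bernoulli_pmf (force_prob V E Z u v)))"

primrec pzf_dist :: "'a set \<Rightarrow> ('a \<Rightarrow> 'a \<Rightarrow> bool) \<Rightarrow> 'a set \<Rightarrow> nat \<Rightarrow> 'a set pmf" where
  "pzf_dist V E A 0 = return_pmf A"
| "pzf_dist V E A (Suc k) = bind_pmf (pzf_dist V E A k) (pzf_step V E)"

definition pzf_T :: "'a set \<Rightarrow> ('a \<Rightarrow> 'a \<Rightarrow> bool) \<Rightarrow> 'a set \<Rightarrow> nat \<Rightarrow> 'a set set" where
  "pzf_T V E A k = {Z \<in> set_pmf (pzf_dist V E A k). \<exists>S. S \<subseteq> Z \<and> zero_forcing_set V E S}"

definition P_A :: "'a set \<Rightarrow> ('a \<Rightarrow> 'a \<Rightarrow> bool) \<Rightarrow> 'a set \<Rightarrow> real" where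
  "P_A V E A = (let k0 = (LEAST k. pzf_T V E A k \<noteq> {})
                in measure_pmf.prob (pzf_dist V E A k0) (pzf_T V E A k0))"

text \<open>The star K_{1,m}: center 0, pendant vertices 1..m.\<close>
definition star_V :: "nat \<Rightarrow> nat set" where
  "star_V m = {0..m}"

definition star_E :: "nat \<Rightarrow> nat \<Rightarrow> nat \<Rightarrow> bool" where
  "star_E m u v \<longleftrightarrow> (u = 0 \<and> v \<in> {1..m}) \<or> (v = 0 \<and> u \<in> {1..m})"

end

theory Submission
  imports Defs
begin

(*
  A black set Z of the star contains a zero forcing set iff Z contains at least m - 1
  leaves.  Consider a black set consisting of the centre and a proper set L of leaves.
  Then only the centre can force; it forces each of the w = m - |L| white leaves
  independently with probability p = (|L| + 1) / m, and the new coloring contains a zero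
  forcing set iff at least w - 1 of these trials succeed, which happens with probability
  near_full_prob w p = w p^(w-1) (1 - p) + p^w.  Starting from {0}, the first step is
  the case L = {} and is the first time success is possible, so
  P_{v0} = near_full_prob m (1/m); starting from a leaf {i}, the first step
  deterministically yields {0, i} and the second step is the case L = {i}, so
  P_{v1} = near_full_prob (m-1) (2/m).  An elementary inequality compares the two.
*)

section \<open>General facts about the probabilistic process\<close>

definition contains_zf :: "'a set \<Rightarrow> ('a \<Rightarrow> 'a \<Rightarrow> bool) \<Rightarrow> 'a set \<Rightarrow> bool" where
  "contains_zf V E Z \<longleftrightarrow> (\<exists>S. S \<subseteq> Z \<and> zero_forcing_set V E S)"

lemma prob_pzf_T:
  "measure_pmf.prob (pzf_dist V E A k) (pzf_T V E A k)
     = measure_pmf.prob (pzf_dist V E A k) {Z. contains_zf V E Z}"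
proof -
  have "pzf_T V E A k = {Z. contains_zf V E Z} \<inter> set_pmf (pzf_dist V E A k)"
    by (auto simp: pzf_T_def contains_zf_def)
  thus ?thesis by (simp add: measure_Int_set_pmf)
qed

lemma P_A_first_success:
  assumes before: "\<And>j Z. j < k \<Longrightarrow> Z \<in> set_pmf (pzf_dist V E A j) \<Longrightarrow> \<not> contains_zf V E Z"
    and prob: "measure_pmf.prob (pzf_dist V E A k) {Z. contains_zf V E Z} = p"
    and pos: "p > 0"
  shows "P_A V E A = p"
proof -
  have Tk: "pzf_T V E A k \<noteq> {}"
    using prob pos prob_pzf_T[of V E A k] by auto
  have "pzf_T V E A j = {}" if "j < k" for j
    using before[OF that] by (auto simp: pzf_T_def contains_zf_def)
  with Tk have first: "(LEAST j. pzf_T V E A j \<noteq> {}) = k"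
    by (intro Least_equality) (auto simp: not_le[symmetric])
  show ?thesis
    unfolding P_A_def Let_def first prob_pzf_T using prob .
qed

lemma pzf_step_single_forcer:
  assumes pairs: "force_pairs V E Z = {c} \<times> W"
    and prob: "\<And>v. v \<in> W \<Longrightarrow> force_prob V E Z c v = p"
  shows "pzf_step V E Z
     = map_pmf (\<lambda>f. Z \<union> {v \<in> W. f (c, v)}) (Pi_pmf ({c} \<times> W) False (\<lambda>_. bernoulli_pmf p))"
  unfolding pzf_step_def pairs
  by (intro map_pmf_cong Pi_pmf_cong) (use prob in auto)

lemma pzf_step_certain:
  assumes fin: "finite (force_pairs V E Z)"
    and prob: "\<And>u v. (u, v) \<in> force_pairs V E Z \<Longrightarrow> force_prob V E Z u v = 1"
  shows "pzf_step V E Z = return_pmf (Z \<union> {v. \<exists>u. (u, v) \<in> force_pairs V E Z})"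
proof -
  have certain: "bernoulli_pmf (1::real) = return_pmf True"
    by (intro pmf_eqI) (auto simp: indicator_def)
  have "Pi_pmf (force_pairs V E Z) False (\<lambda>(u, v). bernoulli_pmf (force_prob V E Z u v))
      = Pi_pmf (force_pairs V E Z) False (\<lambda>_. return_pmf True)"
    by (intro Pi_pmf_cong) (auto simp: prob certain)
  thus ?thesis
    unfolding pzf_step_def using fin by simp
qed

lemma zf_closure_subset: "zf_closure V E S \<subseteq> S \<union> V"
proof
  fix x assume "x \<in> zf_closure V E S"
  thus "x \<in> S \<union> V" by induction (auto simp: nbhd_def)
qed

text \<open>The probability that at least w - 1 of w independent trials with success
  probability p succeed.\<close>
definition near_full_prob :: "nat \<Rightarrow> real \<Rightarrow> real" where
  "near_full_prob w p = real w * p ^ (w - 1) * (1 - p) + p ^ w"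

text \<open>Only the outcomes k and k + 1 of Binomial(k + 1, p) contribute.\<close>
lemma binomial_near_full:
  assumes "0 \<le> p" "p \<le> 1"
  shows "measure_pmf.prob (binomial_pmf (Suc k) p) {k..} = near_full_prob (Suc k) p"
proof -
  let ?B = "binomial_pmf (Suc k) p"
  have "set_pmf ?B \<subseteq> {..Suc k}"
    using assms by (auto simp: set_pmf_binomial_eq)
  hence "{k..} \<inter> set_pmf ?B = {k, Suc k} \<inter> set_pmf ?B"
    by auto
  hence "measure_pmf.prob ?B {k..} = measure_pmf.prob ?B {k, Suc k}"
    by (metis measure_Int_set_pmf)
  also have "\<dots> = pmf ?B k + pmf ?B (Suc k)"
    by (subst measure_measure_pmf_finite) auto
  also have "\<dots> = near_full_prob (Suc k) p"
    using assms by (simp add: near_full_prob_def)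
  finally show ?thesis .
qed

lemma bernoulli_trials_near_full:
  assumes W: "finite W" "W \<noteq> {}" and p: "0 \<le> p" "p \<le> 1"
  shows "measure_pmf.prob (Pi_pmf ({c} \<times> W) False (\<lambda>_. bernoulli_pmf p))
            {f. card W - 1 \<le> card {v \<in> W. f (c, v)}}
       = near_full_prob (card W) p"
proof -
  obtain k where k: "card W = Suc k"
    using W by (cases "card W") auto
  have fin: "finite ({c} \<times> W)" and card_cW: "card ({c} \<times> W) = Suc k"
    using W k by (simp_all add: card_cartesian_product)
  have successes: "card {x \<in> {c} \<times> W. f x} = card {v \<in> W. f (c, v)}" for f
  proof -
    have "{x \<in> {c} \<times> W. f x} = (\<lambda>v. (c, v)) ` {v \<in> W. f (c, v)}" by auto
    thus ?thesis by (simp add: card_image inj_on_def)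
  qed
  have "{f. card W - 1 \<le> card {v \<in> W. f (c, v)}} = (\<lambda>f. card {x \<in> {c} \<times> W. f x}) -` {k..}"
    using successes k by auto
  hence "measure_pmf.prob (Pi_pmf ({c} \<times> W) False (\<lambda>_. bernoulli_pmf p))
            {f. card W - 1 \<le> card {v \<in> W. f (c, v)}}
       = measure_pmf.prob (map_pmf (\<lambda>f. card {x \<in> {c} \<times> W. f x})
            (Pi_pmf ({c} \<times> W) False (\<lambda>_. bernoulli_pmf p))) {k..}"
    by simp
  also have "\<dots> = measure_pmf.prob (binomial_pmf (Suc k) p) {k..}"
    using binomial_pmf_altdef'[OF fin card_cW, of p False] p by simp
  finally show ?thesis
    using binomial_near_full[OF p] k by simp
qed

section \<open>The star K_{1,m}\<close>

lemma nbhd_star: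
  "nbhd (star_V m) (star_E m) u = (if u = 0 then {1..m} else if u \<in> {1..m} then {0} else {})"
  by (auto simp: nbhd_def star_V_def star_E_def)

text \<open>If S contains fewer than m - 1 leaves, the centre can never force (it has at
  least two white leaves), so S only grows by the centre: S is not zero forcing.\<close>
lemma star_zf_needs_leaves:
  assumes zf: "zero_forcing_set (star_V m) (star_E m) S"
  shows "m - 1 \<le> card (S \<inter> {1..m})"
proof (rule ccontr)
  assume few: "\<not> m - 1 \<le> card (S \<inter> {1..m})"
  have "x \<in> S \<union> {0}" if "x \<in> zf_closure (star_V m) (star_E m) S" for x
    using that
  proof induction
    case (force u v)
    show ?case
    proof (cases "u = 0")
      case True
      with force have v: "v \<in> {1..m}" by (simp add: nbhd_star)
      show ?thesis
      proof (rule ccontr)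
        assume "v \<notin> S \<union> {0}"
        with force True v have "{1..m} - {v} \<subseteq> S \<inter> {1..m}"
          by (auto simp: nbhd_star)
        hence "card ({1..m} - {v}) \<le> card (S \<inter> {1..m})"
          by (intro card_mono) auto
        with v few show False by simp
      qed
    next
      case False
      with force show ?thesis by (auto simp: nbhd_star split: if_splits)
    qed
  qed simp
  hence "star_V m \<subseteq> S \<union> {0}"
    using zf by (auto simp: zero_forcing_set_def)
  hence "{1..m} \<subseteq> S \<inter> {1..m}"
    by (auto simp: star_V_def)
  hence "card {1..m} \<le> card (S \<inter> {1..m})" by (intro card_mono) auto
  with few show False by simp
qed

text \<open>Conversely, m - 1 black leaves force the centre and then the last leaf.\<close>
lemma star_zf_from_leaves:
  assumes m: "m \<ge> 2" and Z: "Z \<subseteq> star_V m" and leaves: "m - 1 \<le> card (Z \<inter> {1..m})"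
  shows "zero_forcing_set (star_V m) (star_E m) Z"
  unfolding zero_forcing_set_def
proof (intro conjI Z equalityI)
  show "zf_closure (star_V m) (star_E m) Z \<subseteq> star_V m"
    using zf_closure_subset[of "star_V m" "star_E m" Z] Z by blast
  have "Z \<inter> {1..m} \<noteq> {}"
  proof
    assume "Z \<inter> {1..m} = {}"
    with leaves m show False by simp
  qed
  then obtain l where l: "l \<in> Z" "l \<in> {1..m}" by blast
  have centre: "0 \<in> zf_closure (star_V m) (star_E m) Z"
  proof (rule zf_closure.force)
    show "l \<in> zf_closure (star_V m) (star_E m) Z" using l(1) by (rule zf_closure.base)
  qed (use l(2) in \<open>auto simp: nbhd_star\<close>)
  show "star_V m \<subseteq> zf_closure (star_V m) (star_E m) Z"
  proof
    fix x assume x: "x \<in> star_V m"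
    show "x \<in> zf_closure (star_V m) (star_E m) Z"
    proof (cases "x \<in> Z \<or> x = 0")
      case True thus ?thesis using centre by (auto intro: zf_closure.base)
    next
      case False
      hence xl: "x \<in> {1..m}" "x \<notin> Z" using x by (auto simp: star_V_def)
      have others: "w \<in> Z" if "w \<in> {1..m}" "w \<noteq> x" for w
      proof (rule ccontr)
        assume "w \<notin> Z"
        hence "Z \<inter> {1..m} \<subseteq> {1..m} - {x, w}" using xl by auto
        hence "card (Z \<inter> {1..m}) \<le> card ({1..m} - {x, w})" by (intro card_mono) auto
        moreover have "card ({1..m} - {x, w}) = m - 2" using xl that by (simp add: card_Diff_subset)
        ultimately show False using leaves m by linarith
      qed
      show ?thesis
      proof (rule zf_closure.force[OF centre])
        show "\<forall>w \<in> nbhd (star_V m) (star_E m) 0. w \<noteq> x \<longrightarrow> w \<in> zf_closure (star_V m) (star_E m) Z"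
          using others by (auto intro: zf_closure.base simp: nbhd_star)
      qed (use xl in \<open>simp add: nbhd_star\<close>)
    qed
  qed
qed

lemma star_contains_zf_iff:
  assumes m: "m \<ge> 2" and Z: "Z \<subseteq> star_V m"
  shows "contains_zf (star_V m) (star_E m) Z \<longleftrightarrow> m - 1 \<le> card (Z \<inter> {1..m})"
proof
  assume "contains_zf (star_V m) (star_E m) Z"
  then obtain S where S: "S \<subseteq> Z" "zero_forcing_set (star_V m) (star_E m) S"
    by (auto simp: contains_zf_def)
  have "card (S \<inter> {1..m}) \<le> card (Z \<inter> {1..m})"
    using S(1) by (intro card_mono) auto
  with star_zf_needs_leaves[OF S(2)] show "m - 1 \<le> card (Z \<inter> {1..m})" by simp
next
  assume "m - 1 \<le> card (Z \<inter> {1..m})"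
  with star_zf_from_leaves[OF m Z] show "contains_zf (star_V m) (star_E m) Z"
    by (auto simp: contains_zf_def)
qed

lemma star_centre_forcing:
  assumes L: "L \<subseteq> {1..m}"
  shows "force_pairs (star_V m) (star_E m) (insert 0 L) = {0} \<times> ({1..m} - L)"
    and "v \<in> {1..m} - L \<Longrightarrow>
           force_prob (star_V m) (star_E m) (insert 0 L) 0 v = real (card L + 1) / real m"
proof -
  show "force_pairs (star_V m) (star_E m) (insert 0 L) = {0} \<times> ({1..m} - L)"
    using L by (auto simp: force_pairs_def nbhd_star)
  assume v: "v \<in> {1..m} - L"
  have "cnbhd (star_V m) (star_E m) 0 \<inter> insert 0 L = insert 0 L"
    using L by (auto simp: cnbhd_def nbhd_star)
  moreover have "\<not> cnbhd (star_V m) (star_E m) 0 \<subseteq> insert 0 L"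
    using v by (auto simp: cnbhd_def nbhd_star)
  moreover have "0 \<notin> L" "finite L" using L finite_subset by auto
  ultimately show "force_prob (star_V m) (star_E m) (insert 0 L) 0 v = real (card L + 1) / real m"
    using v by (auto simp: force_prob_def deg_def nbhd_star)
qed

text \<open>One step from the centre plus a proper set L of leaves: the centre forces each of
  the m - |L| white leaves with probability (|L| + 1) / m, and success means that at most
  one of them stays white.\<close>
lemma star_centre_step:
  assumes m: "m \<ge> 2" and L: "L \<subseteq> {1..m}" "card L < m"
  shows "measure_pmf.prob (pzf_step (star_V m) (star_E m) (insert 0 L))
            {Z. contains_zf (star_V m) (star_E m) Z}
       = near_full_prob (m - card L) (real (card L + 1) / real m)"
proof -
  define W where "W = {1..m} - L"
  define p where "p = real (card L + 1) / real m"
  define R where "R = (\<lambda>f. insert 0 L \<union> {v \<in> W. f (0::nat, v)})"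
  have finL: "finite L" using L finite_subset by blast
  have cardW: "card W = m - card L"
    using L by (simp add: W_def card_Diff_subset finL)
  have W_ne: "W \<noteq> {}" using cardW L by (cases "W = {}") auto
  have step: "pzf_step (star_V m) (star_E m) (insert 0 L)
      = map_pmf R (Pi_pmf ({0} \<times> W) False (\<lambda>_. bernoulli_pmf p))"
    unfolding R_def W_def p_def
    using star_centre_forcing[OF L(1)] by (rule pzf_step_single_forcer)
  have success: "contains_zf (star_V m) (star_E m) (R f) \<longleftrightarrow> card W - 1 \<le> card {v \<in> W. f (0, v)}"
    for f
  proof -
    have "R f \<subseteq> star_V m" using L by (auto simp: R_def W_def star_V_def)
    moreover have "R f \<inter> {1..m} = L \<union> {v \<in> W. f (0, v)}"
      using L by (auto simp: R_def W_def)
    moreover have "card (L \<union> {v \<in> W. f (0, v)}) = card L + card {v \<in> W. f (0, v)}"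
      using finL by (intro card_Un_disjoint) (auto simp: W_def)
    ultimately show ?thesis
      using star_contains_zf_iff[OF m] cardW L by auto
  qed
  have p01: "0 \<le> p" "p \<le> 1" using L m by (auto simp: p_def)
  have preimage: "R -` {Z. contains_zf (star_V m) (star_E m) Z}
      = {f. card W - 1 \<le> card {v \<in> W. f (0, v)}}"
    using success by auto
  have "measure_pmf.prob (pzf_step (star_V m) (star_E m) (insert 0 L))
            {Z. contains_zf (star_V m) (star_E m) Z}
       = measure_pmf.prob (Pi_pmf ({0::nat} \<times> W) False (\<lambda>_. bernoulli_pmf p))
            {f. card W - 1 \<le> card {v \<in> W. f (0, v)}}"
    unfolding step measure_map_pmf preimage ..
  also have "\<dots> = near_full_prob (card W) p"
    using W_ne p01 by (intro bernoulli_trials_near_full) (auto simp: W_def)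
  finally show ?thesis
    using cardW by (simp add: p_def)
qed

lemma star_leaf_step:
  assumes i: "i \<in> {1..m}"
  shows "pzf_step (star_V m) (star_E m) {i} = return_pmf {0, i}"
proof -
  have pairs: "force_pairs (star_V m) (star_E m) {i} = {(i, 0)}"
    using i by (auto simp: force_pairs_def nbhd_star)
  have "force_prob (star_V m) (star_E m) {i} i 0 = 1"
  proof -
    have "cnbhd (star_V m) (star_E m) i = {i, 0}" using i by (auto simp: cnbhd_def nbhd_star)
    thus ?thesis using i by (auto simp: force_prob_def deg_def nbhd_star)
  qed
  thus ?thesis
    using pairs by (subst pzf_step_certain) auto
qed

text \<open>From the centre: the initial coloring has no leaf, one step may finish.\<close>
lemma P_A_star_centre:
  assumes m: "m \<ge> 3"
  shows "P_A (star_V m) (star_E m) {0} = near_full_prob m (1 / real m)"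
proof (rule P_A_first_success[where k = 1])
  show "\<not> contains_zf (star_V m) (star_E m) Z"
    if "j < 1" "Z \<in> set_pmf (pzf_dist (star_V m) (star_E m) {0} j)" for j Z
  proof -
    have "Z = {0}" "{0} \<inter> {1..m} = {}" using that by auto
    thus ?thesis using m star_contains_zf_iff[of m Z] by (simp add: star_V_def)
  qed
  show "measure_pmf.prob (pzf_dist (star_V m) (star_E m) {0} 1)
          {Z. contains_zf (star_V m) (star_E m) Z} = near_full_prob m (1 / real m)"
    using star_centre_step[of m "{}"] m by (simp add: bind_return_pmf)
  show "near_full_prob m (1 / real m) > 0"
    using m by (auto simp: near_full_prob_def intro!: add_nonneg_pos)
qed

text \<open>From a leaf: the colorings {i} and {0, i} of times 0 and 1 have only one leaf,
  and the second step is a centre step with one black leaf.\<close>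
lemma P_A_star_leaf:
  assumes m: "m \<ge> 3" and i: "i \<in> {1..m}"
  shows "P_A (star_V m) (star_E m) {i} = near_full_prob (m - 1) (2 / real m)"
proof (rule P_A_first_success[where k = 2])
  have dist1: "pzf_dist (star_V m) (star_E m) {i} 1 = return_pmf {0, i}"
    using i by (simp add: bind_return_pmf star_leaf_step)
  show "\<not> contains_zf (star_V m) (star_E m) Z"
    if "j < 2" "Z \<in> set_pmf (pzf_dist (star_V m) (star_E m) {i} j)" for j Z
  proof -
    have "Z = {i} \<or> Z = {0, i}"
      using that dist1 by (auto simp: less_2_cases_iff)
    moreover have "{i} \<inter> {1..m} = {i}" "{0, i} \<inter> {1..m} = {i}" using i by auto
    moreover have "Z \<subseteq> star_V m" if "Z = {i} \<or> Z = {0, i}"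
      using that i by (auto simp: star_V_def)
    ultimately show ?thesis
      using m star_contains_zf_iff[of m Z] by auto
  qed
  have dist2: "pzf_dist (star_V m) (star_E m) {i} 2 = pzf_step (star_V m) (star_E m) (insert 0 {i})"
    using i by (simp add: numeral_2_eq_2 bind_return_pmf star_leaf_step)
  show "measure_pmf.prob (pzf_dist (star_V m) (star_E m) {i} 2)
          {Z. contains_zf (star_V m) (star_E m) Z} = near_full_prob (m - 1) (2 / real m)"
    unfolding dist2 using star_centre_step[of m "{i}"] m i by simp
  show "near_full_prob (m - 1) (2 / real m) > 0"
    using m by (auto simp: near_full_prob_def intro!: add_nonneg_pos)
qed

text \<open>Starting from a single leaf is strictly better than starting from the centre:
  after dividing by (1/m)^(m-2) the claim becomes m^2 - m + 1 < 2^(m-2) m ((m-1)(m-2) + 2).\<close>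
lemma near_full_prob_leaf_beats_centre:
  assumes m: "m \<ge> 3"
  shows "near_full_prob m (1 / real m) < near_full_prob (m - 1) (2 / real m)"
proof -
  define N where "N = m - 2"
  have N: "m = N + 2" "N \<ge> 1" using m by (auto simp: N_def)
  define r where "r = real m"
  have r: "r = real N + 2" "r \<ge> 3" using N m by (auto simp: r_def)
  define q where "q = (1 / r) ^ N"
  have q: "q > 0" using r by (simp add: q_def)
  have r_nonzero: "r \<noteq> 0" using r by simp
  have centre: "near_full_prob m (1 / r) = q * ((1 - 1/r) + 1/r^2)"
  proof -
    have powers: "(1 / r) ^ (m - 1) = q * (1 / r)" "(1 / r) ^ m = q * (1/r)^2"
      unfolding q_def using N by (simp_all add: power_add power2_eq_square)
    have "r * (q * (1 / r)) * (1 - 1 / r) + q * (1/r)^2 = q * ((1 - 1/r) + 1/r^2)"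
      using r_nonzero by (simp add: field_simps power2_eq_square)
    thus ?thesis unfolding near_full_prob_def r_def[symmetric] powers .
  qed
  have leaf: "near_full_prob (m - 1) (2 / r) = (2 / r) ^ N * ((r - 1) * (1 - 2/r) + 2/r)"
  proof -
    have "(2 / r) ^ (m - 1) = (2 / r) ^ N * (2 / r)" "real (m - 1) = r - 1" "m - 1 - 1 = N"
      using N by (simp_all add: power_add r_def)
    moreover have "(r - 1) * (2 / r) ^ N * (1 - 2 / r) + (2 / r) ^ N * (2 / r)
        = (2 / r) ^ N * ((r - 1) * (1 - 2/r) + 2/r)"
      by (simp only: distrib_left mult.commute mult.left_commute)
    ultimately show ?thesis by (simp add: near_full_prob_def)
  qed
  have factors: "(1 - 1/r) + 1/r^2 < (r - 1) * (1 - 2/r) + 2/r"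
  proof -
    have "r^2 * ((1 - 1/r) + 1/r^2) = r^2 - r + 1"
      using r_nonzero by (simp add: field_simps power2_eq_square)
    moreover have "r^2 * ((r - 1) * (1 - 2/r) + 2/r) = (r - 1) * r * (r - 2) + 2 * r"
      using r_nonzero by (simp add: field_simps power2_eq_square)
    moreover have "(r - 1) * r * (r - 2) \<ge> (r - 1) * r * 1"
      using r by (intro mult_left_mono) auto
    ultimately have "r^2 * ((1 - 1/r) + 1/r^2) < r^2 * ((r - 1) * (1 - 2/r) + 2/r)"
      using r by (simp add: power2_eq_square algebra_simps)
    thus ?thesis using r by (simp add: mult_less_cancel_left_pos)
  qed
  have "q * ((1 - 1/r) + 1/r^2) < q * ((r - 1) * (1 - 2/r) + 2/r)"
    using q factors by simp
  also have "\<dots> \<le> (2 / r) ^ N * ((r - 1) * (1 - 2/r) + 2/r)"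
    using r factors unfolding q_def
    by (intro mult_right_mono power_mono) (auto simp: divide_right_mono field_simps)
  finally show ?thesis using centre leaf by (simp add: r_def)
qed

text \<open>All leaves give the same value, so the singleton starting sets realise exactly
  the two values obtained from the centre and from leaf 1.\<close>
lemma star_singleton_values:
  assumes m: "m \<ge> 3"
  shows "{P_A (star_V m) (star_E m) A | A. A \<subseteq> star_V m \<and> card A = 1}
       = {P_A (star_V m) (star_E m) {0}, P_A (star_V m) (star_E m) {1}}"
proof (intro equalityI subsetI)
  fix x assume "x \<in> {P_A (star_V m) (star_E m) A | A. A \<subseteq> star_V m \<and> card A = 1}"
  then obtain A where A: "x = P_A (star_V m) (star_E m) A" "A \<subseteq> star_V m" "card A = 1"
    by blast
  then obtain a where a: "A = {a}" "a \<in> star_V m"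
    by (auto simp: card_1_singleton_iff)
  show "x \<in> {P_A (star_V m) (star_E m) {0}, P_A (star_V m) (star_E m) {1}}"
  proof (cases "a = 0")
    case False
    hence "a \<in> {1..m}" "(1::nat) \<in> {1..m}" using a(2) m by (auto simp: star_V_def)
    hence "P_A (star_V m) (star_E m) {a} = P_A (star_V m) (star_E m) {1}"
      using m by (simp only: P_A_star_leaf)
    thus ?thesis using A(1) a(1) by simp
  qed (use A(1) a(1) in simp)
next
  fix x assume x: "x \<in> {P_A (star_V m) (star_E m) {0}, P_A (star_V m) (star_E m) {1}}"
  have "{0} \<subseteq> star_V m" "{1} \<subseteq> star_V m" using m by (auto simp: star_V_def)
  moreover have "card {0::nat} = 1" "card {1::nat} = 1" by simp_all
  ultimately show "x \<in> {P_A (star_V m) (star_E m) A | A. A \<subseteq> star_V m \<and> card A = 1}"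
    using x by blast
qed

theorem mainTheorem5:
  fixes m :: nat
  assumes "m \<ge> 3"
  shows "P_A (star_V m) (star_E m) {1} > P_A (star_V m) (star_E m) {0}
         \<and> Max {P_A (star_V m) (star_E m) A | A. A \<subseteq> star_V m \<and> card A = 1}
             = P_A (star_V m) (star_E m) {1}"
proof -
  have leaf_1: "(1::nat) \<in> {1..m}" using assms by simp
  have leaf_wins: "P_A (star_V m) (star_E m) {0} < P_A (star_V m) (star_E m) {1}"
    unfolding P_A_star_centre[OF assms] P_A_star_leaf[OF assms leaf_1]
    by (rule near_full_prob_leaf_beats_centre[OF assms])
  moreover have "Max {P_A (star_V m) (star_E m) {0}, P_A (star_V m) (star_E m) {1}}
      = P_A (star_V m) (star_E m) {1}"
    using leaf_wins by (simp add: max_def)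
  ultimately show ?thesis
    unfolding star_singleton_values[OF assms] by (intro conjI)
qed

end
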